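(* Let $\Lambda=\mathsf{iA}\oplus\Gamma$ be an iA-logic. Then for every S4K-logic $\Theta$ with $(\mathsf{S4}\otimes\mathsf K)\oplus t(\Gamma)\subseteq\Theta\subseteq(\mathsf{S4}\otimes\mathsf K)\oplus\mathsf{Grz_i}\oplus t(\Gamma)\oplus\mathsf{BHL}$, $\Lambda$ is embedded in $\Theta$ by $t$: for all $\varphi\in\mathcal L_{\multimap}$, $\varphi\in\Lambda$ iff $t(\varphi)\in\Theta$.
   Context: $\mathcal L_{\multimap}$: atoms, $\top,\bot,\wedge,\vee,\to$ and binary $\multimap$. $\mathsf{iA}$: least set containing substitution instances of intuitionistic tautologies and instances of $((\varphi\multimap\psi)\wedge(\varphi\multimap\chi))\to(\varphi\multimap(\psi\wedge\chi))$, $((\varphi\multimap\chi)\wedge(\psi\multimap\chi))\to((\varphi\vee\psi)\multimap\chi)$, $((\varphi\multimap\psi)\wedge(\psi\multimap\chi))\to(\varphi\multimap\chi)$, closed under modus ponens and the rule from $\varphi\to\psi$ infer $\varphi\multimap\psi$; $\mathsf{iA}\oplus\Gamma$ is the least extension containing $\Gamma$ closed under those rules and uniform substitution. S4K-logic: set of formulae of the classical bimodal language $\mathcal L_{i,m}$ ($\Box_i,\Box_m$) containing classical tautologies, $\mathsf K$ for both boxes, $\Box_ip\to p$, $\Box_ip\to\Box_i\Box_ip$, closed under modus ponens, necessitation for both boxes and substitution; $\mathsf{S4}\otimes\mathsf K$ is the least one and $\oplus$ adds axioms. $\mathsf{Grz_i}$: $\Box_i(\Box_i(p\to\Box_ip)\to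 p)\to p$. $\mathsf{BHL}$: $\Box_mp\to\Box_i\Box_mp$. Translation $t$: $t(p)=\Box_ip$, $t(\top)=\top$, $t(\bot)=\bot$, $t(\varphi\star\psi)=\Box_i(t\varphi\star t\psi)$ for $\star\in\{\wedge,\vee,\to\}$, $t(\varphi\multimap\psi)=\Box_i\Box_m(t\varphi\to t\psi)$. *)

theory Defs
  imports Main
begin

datatype ifm =
    Atom nat
  | ITop
  | IBot
  | IAnd ifm ifm
  | IOr ifm ifm
  | IImp ifm ifm
  | Strict ifm ifm

primrec isubst :: "(nat \<Rightarrow> ifm) \<Rightarrow> ifm \<Rightarrow> ifm" where
  "isubst \<sigma> (Atom p) = \<sigma> p"
| "isubst \<sigma> ITop = ITop"
| "isubst \<sigma> IBot = IBot"
| "isubst \<sigma> (IAnd a b) = IAnd (isubst \<sigma> a) (isubst \<sigma> b)"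
| "isubst \<sigma> (IOr a b) = IOr (isubst \<sigma> a) (isubst \<sigma> b)"
| "isubst \<sigma> (IImp a b) = IImp (isubst \<sigma> a) (isubst \<sigma> b)"
| "isubst \<sigma> (Strict a b) = Strict (isubst \<sigma> a) (isubst \<sigma> b)"

text \<open>Substitution instances (in the full language) of intuitionistic propositional
  tautologies: generated by a standard Hilbert calculus for IPC whose axiom schemes
  range over all formulas of the language, closed under modus ponens.\<close>
inductive_set IPC :: "ifm set" where
  ax1: "IImp a (IImp b a) \<in> IPC"
| ax2: "IImp (IImp a (IImp b c)) (IImp (IImp a b) (IImp a c)) \<in> IPC"
| ax3: "IImp (IAnd a b) a \<in> IPC"
| ax4: "IImp (IAnd a b) b \<in> IPC"
| ax5: "IImp a (IImp b (IAnd a b)) \<in> IPC"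
| ax6: "IImp a (IOr a b) \<in> IPC"
| ax7: "IImp b (IOr a b) \<in> IPC"
| ax8: "IImp (IImp a c) (IImp (IImp b c) (IImp (IOr a b) c)) \<in> IPC"
| ax9: "IImp IBot a \<in> IPC"
| ax10: "ITop \<in> IPC"
| mp: "a \<in> IPC \<Longrightarrow> IImp a b \<in> IPC \<Longrightarrow> b \<in> IPC"

inductive_set iA_ext :: "ifm set \<Rightarrow> ifm set" for \<Gamma> :: "ifm set" where
  hyp: "a \<in> \<Gamma> \<Longrightarrow> a \<in> iA_ext \<Gamma>"
| ipc: "a \<in> IPC \<Longrightarrow> a \<in> iA_ext \<Gamma>"
| sAnd: "IImp (IAnd (Strict a b) (Strict a c)) (Strict a (IAnd b c)) \<in> iA_ext \<Gamma>"
| sOr: "IImp (IAnd (Strict a c) (Strict b c)) (Strict (IOr a b) c) \<in> iA_ext \<Gamma>"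
| sTr: "IImp (IAnd (Strict a b) (Strict b c)) (Strict a c) \<in> iA_ext \<Gamma>"
| mp: "a \<in> iA_ext \<Gamma> \<Longrightarrow> IImp a b \<in> iA_ext \<Gamma> \<Longrightarrow> b \<in> iA_ext \<Gamma>"
| strict: "IImp a b \<in> iA_ext \<Gamma> \<Longrightarrow> Strict a b \<in> iA_ext \<Gamma>"
| subst: "a \<in> iA_ext \<Gamma> \<Longrightarrow> isubst \<sigma> a \<in> iA_ext \<Gamma>"

datatype mfm =
    MAtom nat
  | MTop
  | MBot
  | MAnd mfm mfm
  | MOr mfm mfm
  | MImp mfm mfm
  | BoxI mfm
  | BoxM mfm

primrec msubst :: "(nat \<Rightarrow> mfm) \<Rightarrow> mfm \<Rightarrow> mfm" where
  "msubst \<sigma> (MAtom p) = \<sigma> p"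
| "msubst \<sigma> MTop = MTop"
| "msubst \<sigma> MBot = MBot"
| "msubst \<sigma> (MAnd a b) = MAnd (msubst \<sigma> a) (msubst \<sigma> b)"
| "msubst \<sigma> (MOr a b) = MOr (msubst \<sigma> a) (msubst \<sigma> b)"
| "msubst \<sigma> (MImp a b) = MImp (msubst \<sigma> a) (msubst \<sigma> b)"
| "msubst \<sigma> (BoxI a) = BoxI (msubst \<sigma> a)"
| "msubst \<sigma> (BoxM a) = BoxM (msubst \<sigma> a)"

text \<open>Boolean evaluation, treating atoms and boxed formulas as propositional variables.
  A formula is a substitution instance of a classical tautology iff it is true under
  every such valuation.\<close>
primrec meval :: "(mfm \<Rightarrow> bool) \<Rightarrow> mfm \<Rightarrow> bool" where
  "meval v (MAtom p) = v (MAtom p)"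
| "meval v MTop = True"
| "meval v MBot = False"
| "meval v (MAnd a b) = (meval v a \<and> meval v b)"
| "meval v (MOr a b) = (meval v a \<or> meval v b)"
| "meval v (MImp a b) = (meval v a \<longrightarrow> meval v b)"
| "meval v (BoxI a) = v (BoxI a)"
| "meval v (BoxM a) = v (BoxM a)"

definition ctaut :: "mfm \<Rightarrow> bool" where
  "ctaut a \<longleftrightarrow> (\<forall>v. meval v a)"

abbreviation (input) pP :: mfm where "pP \<equiv> MAtom 0"
abbreviation (input) pQ :: mfm where "pQ \<equiv> MAtom 1"

definition axK_i :: mfm where
  "axK_i = MImp (BoxI (MImp pP pQ)) (MImp (BoxI pP) (BoxI pQ))"
definition axK_m :: mfm where
  "axK_m = MImp (BoxM (MImp pP pQ)) (MImp (BoxM pP) (BoxM pQ))"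
definition axT_i :: mfm where
  "axT_i = MImp (BoxI pP) pP"
definition ax4_i :: mfm where
  "ax4_i = MImp (BoxI pP) (BoxI (BoxI pP))"
definition Grz_i :: mfm where
  "Grz_i = MImp (BoxI (MImp (BoxI (MImp pP (BoxI pP))) pP)) pP"
definition BHL :: mfm where
  "BHL = MImp (BoxM pP) (BoxI (BoxM pP))"

definition S4K_logic :: "mfm set \<Rightarrow> bool" where
  "S4K_logic \<Theta> \<longleftrightarrow>
     (\<forall>a. ctaut a \<longrightarrow> a \<in> \<Theta>) \<and>
     axK_i \<in> \<Theta> \<and> axK_m \<in> \<Theta> \<and> axT_i \<in> \<Theta> \<and> ax4_i \<in> \<Theta> \<and>
     (\<forall>a b. a \<in> \<Theta> \<longrightarrow> MImp a b \<in> \<Theta> \<longrightarrow> b \<in> \<Theta>) \<and>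
     (\<forall>a. a \<in> \<Theta> \<longrightarrow> BoxI a \<in> \<Theta>) \<and>
     (\<forall>a. a \<in> \<Theta> \<longrightarrow> BoxM a \<in> \<Theta>) \<and>
     (\<forall>a \<sigma>. a \<in> \<Theta> \<longrightarrow> msubst \<sigma> a \<in> \<Theta>)"

inductive_set S4K_ext :: "mfm set \<Rightarrow> mfm set" for A :: "mfm set" where
  hyp: "a \<in> A \<Longrightarrow> a \<in> S4K_ext A"
| taut: "ctaut a \<Longrightarrow> a \<in> S4K_ext A"
| kI: "axK_i \<in> S4K_ext A"
| kM: "axK_m \<in> S4K_ext A"
| tI: "axT_i \<in> S4K_ext A"
| fourI: "ax4_i \<in> S4K_ext A"
| mp: "a \<in> S4K_ext A \<Longrightarrow> MImp a b \<in> S4K_ext A \<Longrightarrow> b \<in> S4K_ext A"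
| necI: "a \<in> S4K_ext A \<Longrightarrow> BoxI a \<in> S4K_ext A"
| necM: "a \<in> S4K_ext A \<Longrightarrow> BoxM a \<in> S4K_ext A"
| subst: "a \<in> S4K_ext A \<Longrightarrow> msubst \<sigma> a \<in> S4K_ext A"

primrec tr :: "ifm \<Rightarrow> mfm" where
  "tr (Atom p) = BoxI (MAtom p)"
| "tr ITop = MTop"
| "tr IBot = MBot"
| "tr (IAnd a b) = BoxI (MAnd (tr a) (tr b))"
| "tr (IOr a b) = BoxI (MOr (tr a) (tr b))"
| "tr (IImp a b) = BoxI (MImp (tr a) (tr b))"
| "tr (Strict a b) = BoxI (BoxM (MImp (tr a) (tr b)))"

end

theory Submission
  imports Defs
begin

text \<open>Soundness: \<open>t\<close> sends every axiom of \<open>iA \<oplus> \<Gamma>\<close> to a theorem of \<open>(S4 \<otimes> K) \<oplus> t(\<Gamma>)\<close>,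
  because translated formulas are \<open>\<box>\<^sub>i\<close>-persistent and \<open>t\<close> commutes with substitution up to
  provable equivalence.

  Faithfulness: if \<open>\<phi> \<notin> \<Lambda>\<close>, some prime \<open>\<Lambda>\<close>-theory omits \<open>\<phi>\<close>. The prime \<open>\<Lambda>\<close>-theories form a
  frame, with inclusion for \<open>\<box>\<^sub>i\<close> and, for \<open>\<box>\<^sub>m\<close>, \<open>w R u\<close> iff \<open>u\<close> is closed under the strict
  implications in \<open>w\<close>. Admitting as values of propositional variables only the sets cut out by
  finitely many conditions \<open>a \<in> w \<Longrightarrow> b \<in> w\<close> gives a general frame: these sets are closed under
  the Boolean operations and both boxes, and the truth lemma says that \<open>t(\<psi>)\<close> denotes the set of
  prime theories containing \<open>\<psi>\<close>. \<open>BHL\<close> is valid because \<open>R\<close> shrinks as \<open>w\<close> grows, and \<open>Grz\<^sub>i\<close>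
  is valid because an admissible set depends on finitely many formulas only, so every point
  outside it sees a point outside it that is maximal with respect to those formulas. Hence
  \<open>t(\<phi>)\<close> is refuted in a model of \<open>(S4 \<otimes> K) \<oplus> Grz\<^sub>i \<oplus> t(\<Gamma>) \<oplus> BHL\<close>.\<close>

section \<open>Derived rules of \<open>(S4 \<otimes> K) \<oplus> A\<close>\<close>

lemma S4K_taut_mp1: "a \<in> S4K_ext A \<Longrightarrow> ctaut (MImp a b) \<Longrightarrow> b \<in> S4K_ext A"
  by (meson S4K_ext.mp S4K_ext.taut)

lemma S4K_taut_mp2:
  "a \<in> S4K_ext A \<Longrightarrow> b \<in> S4K_ext A \<Longrightarrow> ctaut (MImp a (MImp b c)) \<Longrightarrow> c \<in> S4K_ext A"
  by (meson S4K_ext.mp S4K_ext.taut)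

lemma S4K_taut_mp3:
  "a \<in> S4K_ext A \<Longrightarrow> b \<in> S4K_ext A \<Longrightarrow> c \<in> S4K_ext A \<Longrightarrow> ctaut (MImp a (MImp b (MImp c d)))
    \<Longrightarrow> d \<in> S4K_ext A"
  by (meson S4K_ext.mp S4K_ext.taut)

lemma S4K_taut_mp4:
  "a \<in> S4K_ext A \<Longrightarrow> b \<in> S4K_ext A \<Longrightarrow> c \<in> S4K_ext A \<Longrightarrow> d \<in> S4K_ext A
    \<Longrightarrow> ctaut (MImp a (MImp b (MImp c (MImp d e)))) \<Longrightarrow> e \<in> S4K_ext A"
  by (meson S4K_ext.mp S4K_ext.taut)

lemma S4K_imp_trans: "MImp a b \<in> S4K_ext A \<Longrightarrow> MImp b c \<in> S4K_ext A \<Longrightarrow> MImp a c \<in> S4K_ext A"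
  by (erule S4K_taut_mp2) (auto simp: ctaut_def)

lemma S4K_K_I: "MImp (BoxI (MImp a b)) (MImp (BoxI a) (BoxI b)) \<in> S4K_ext A"
  using S4K_ext.subst[OF S4K_ext.kI, where \<sigma>="\<lambda>n. if n = 0 then a else b"] by (simp add: axK_i_def)

lemma S4K_K_M: "MImp (BoxM (MImp a b)) (MImp (BoxM a) (BoxM b)) \<in> S4K_ext A"
  using S4K_ext.subst[OF S4K_ext.kM, where \<sigma>="\<lambda>n. if n = 0 then a else b"] by (simp add: axK_m_def)

lemma S4K_T_I: "MImp (BoxI a) a \<in> S4K_ext A"
  using S4K_ext.subst[OF S4K_ext.tI, where \<sigma>="\<lambda>n. a"] by (simp add: axT_i_def)

lemma S4K_4_I: "MImp (BoxI a) (BoxI (BoxI a)) \<in> S4K_ext A"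
  using S4K_ext.subst[OF S4K_ext.fourI, where \<sigma>="\<lambda>n. a"] by (simp add: ax4_i_def)

lemma S4K_BoxI_mono: "MImp a b \<in> S4K_ext A \<Longrightarrow> MImp (BoxI a) (BoxI b) \<in> S4K_ext A"
  by (meson S4K_K_I S4K_ext.mp S4K_ext.necI)

lemma S4K_BoxM_mono: "MImp a b \<in> S4K_ext A \<Longrightarrow> MImp (BoxM a) (BoxM b) \<in> S4K_ext A"
  by (meson S4K_K_M S4K_ext.mp S4K_ext.necM)

lemma S4K_BoxI_conj: "MImp (MAnd (BoxI a) (BoxI b)) (BoxI (MAnd a b)) \<in> S4K_ext A"
proof -
  have "MImp a (MImp b (MAnd a b)) \<in> S4K_ext A" by (rule S4K_ext.taut) (simp add: ctaut_def)
  then have "MImp (BoxI a) (BoxI (MImp b (MAnd a b))) \<in> S4K_ext A" by (rule S4K_BoxI_mono)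
  then show ?thesis by (rule S4K_taut_mp2[OF _ S4K_K_I[of b "MAnd a b"]]) (simp add: ctaut_def)
qed

lemma S4K_BoxM_conj: "MImp (MAnd (BoxM a) (BoxM b)) (BoxM (MAnd a b)) \<in> S4K_ext A"
proof -
  have "MImp a (MImp b (MAnd a b)) \<in> S4K_ext A" by (rule S4K_ext.taut) (simp add: ctaut_def)
  then have "MImp (BoxM a) (BoxM (MImp b (MAnd a b))) \<in> S4K_ext A" by (rule S4K_BoxM_mono)
  then show ?thesis by (rule S4K_taut_mp2[OF _ S4K_K_M[of b "MAnd a b"]]) (simp add: ctaut_def)
qed

lemma S4K_BoxI_intro: "MImp (BoxI a) b \<in> S4K_ext A \<Longrightarrow> MImp (BoxI a) (BoxI b) \<in> S4K_ext A"
  by (rule S4K_imp_trans[OF S4K_4_I S4K_BoxI_mono])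

lemma S4K_imp_cong:
  assumes "MImp a a' \<in> S4K_ext A" "MImp a' a \<in> S4K_ext A" "MImp b b' \<in> S4K_ext A" "MImp b' b \<in> S4K_ext A"
  shows "MImp (MAnd a b) (MAnd a' b') \<in> S4K_ext A \<and> MImp (MAnd a' b') (MAnd a b) \<in> S4K_ext A \<and>
         MImp (MOr a b) (MOr a' b') \<in> S4K_ext A \<and> MImp (MOr a' b') (MOr a b) \<in> S4K_ext A \<and>
         MImp (MImp a b) (MImp a' b') \<in> S4K_ext A \<and> MImp (MImp a' b') (MImp a b) \<in> S4K_ext A"
  by (intro conjI; rule S4K_taut_mp4[OF assms]) (auto simp: ctaut_def)

section \<open>Soundness of the translation\<close>

lemma tr_persistent: "MImp (tr a) (BoxI (tr a)) \<in> S4K_ext A"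
proof (cases a)
  case ITop
  have "BoxI MTop \<in> S4K_ext A" by (rule S4K_ext.necI, rule S4K_ext.taut) (simp add: ctaut_def)
  then show ?thesis using ITop by (auto intro: S4K_taut_mp1 simp: ctaut_def)
next
  case IBot
  then show ?thesis by (auto intro: S4K_ext.taut simp: ctaut_def)
qed (auto intro: S4K_4_I)

lemma tr_mp: "tr a \<in> S4K_ext A \<Longrightarrow> tr (IImp a b) \<in> S4K_ext A \<Longrightarrow> tr b \<in> S4K_ext A"
  by simp (meson S4K_ext.mp S4K_T_I)

lemma tr_IImp_I: "MImp (tr a) (tr b) \<in> S4K_ext A \<Longrightarrow> tr (IImp a b) \<in> S4K_ext A"
  by (simp add: S4K_ext.necI)

lemma tr_IImp_IImp_I:
  assumes "MImp (tr a) (MImp (tr b) (tr c)) \<in> S4K_ext A"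
  shows "tr (IImp a (IImp b c)) \<in> S4K_ext A"
proof (rule tr_IImp_I)
  have "MImp (BoxI (tr a)) (tr (IImp b c)) \<in> S4K_ext A"
    using S4K_BoxI_mono[OF assms] by simp
  then show "MImp (tr a) (tr (IImp b c)) \<in> S4K_ext A"
    by (rule S4K_imp_trans[OF tr_persistent])
qed

lemma tr_IPC: "a \<in> IPC \<Longrightarrow> tr a \<in> S4K_ext A"
proof (induction rule: IPC.induct)
  case (ax1 a b)
  show ?case by (rule tr_IImp_IImp_I, rule S4K_ext.taut) (simp add: ctaut_def)
next
  case (ax2 a b c)
  let ?A = "tr a" and ?B = "tr b" and ?C = "tr c"
  have "MImp (MAnd (MImp ?A (BoxI (MImp ?B ?C))) (MImp ?A ?B)) (MImp ?A ?C) \<in> S4K_ext A"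
    by (rule S4K_taut_mp1[OF S4K_T_I[of "MImp ?B ?C"]]) (auto simp: ctaut_def)
  then have "MImp (BoxI (MAnd (MImp ?A (BoxI (MImp ?B ?C))) (MImp ?A ?B))) (BoxI (MImp ?A ?C))
      \<in> S4K_ext A"
    by (rule S4K_BoxI_mono)
  then have "MImp (BoxI (MImp ?A (BoxI (MImp ?B ?C)))) (MImp (BoxI (MImp ?A ?B)) (BoxI (MImp ?A ?C)))
      \<in> S4K_ext A"
    by (rule S4K_taut_mp2[OF _ S4K_BoxI_conj[of "MImp ?A (BoxI (MImp ?B ?C))" "MImp ?A ?B"]])
      (auto simp: ctaut_def)
  then show ?case by (intro tr_IImp_IImp_I) simp
next
  case (ax3 a b)
  show ?case by (rule tr_IImp_I, rule S4K_taut_mp1[OF S4K_T_I]) (auto simp: ctaut_def)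
next
  case (ax4 a b)
  show ?case by (rule tr_IImp_I, rule S4K_taut_mp1[OF S4K_T_I]) (auto simp: ctaut_def)
next
  case (ax5 a b)
  show ?case
    by (rule tr_IImp_IImp_I, rule S4K_taut_mp3[OF tr_persistent[of a] tr_persistent[of b]
          S4K_BoxI_conj[of "tr a" "tr b"]])
      (auto simp: ctaut_def)
next
  case (ax6 a b)
  have "MImp (tr a) (MOr (tr a) (tr b)) \<in> S4K_ext A" by (rule S4K_ext.taut) (simp add: ctaut_def)
  then show ?case by (intro tr_IImp_I) (simp add: S4K_imp_trans[OF tr_persistent S4K_BoxI_mono])
next
  case (ax7 b a)
  have "MImp (tr b) (MOr (tr a) (tr b)) \<in> S4K_ext A" by (rule S4K_ext.taut) (simp add: ctaut_def)
  then show ?case by (intro tr_IImp_I) (simp add: S4K_imp_trans[OF tr_persistent S4K_BoxI_mono])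
next
  case (ax8 a c b)
  let ?A = "tr a" and ?B = "tr b" and ?C = "tr c"
  have "MImp (MAnd (MImp ?A ?C) (MImp ?B ?C)) (MImp (BoxI (MOr ?A ?B)) ?C) \<in> S4K_ext A"
    by (rule S4K_taut_mp1[OF S4K_T_I[of "MOr ?A ?B"]]) (auto simp: ctaut_def)
  then have "MImp (BoxI (MAnd (MImp ?A ?C) (MImp ?B ?C))) (BoxI (MImp (BoxI (MOr ?A ?B)) ?C))
      \<in> S4K_ext A"
    by (rule S4K_BoxI_mono)
  then have "MImp (BoxI (MImp ?A ?C)) (MImp (BoxI (MImp ?B ?C)) (BoxI (MImp (BoxI (MOr ?A ?B)) ?C)))
      \<in> S4K_ext A"
    by (rule S4K_taut_mp2[OF _ S4K_BoxI_conj[of "MImp ?A ?C" "MImp ?B ?C"]]) (auto simp: ctaut_def)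
  then show ?case by (intro tr_IImp_IImp_I) simp
next
  case (ax9 a)
  show ?case by (rule tr_IImp_I, rule S4K_ext.taut) (simp add: ctaut_def)
next
  case ax10
  show ?case by (simp add: S4K_ext.taut ctaut_def)
next
  case (mp a b)
  then show ?case by (blast intro: tr_mp)
qed

lemma tr_strict_axiom:
  assumes "MImp (MAnd (MImp (tr a) (tr b)) (MImp (tr c) (tr d))) (MImp (tr e) (tr f)) \<in> S4K_ext A"
  shows "tr (IImp (IAnd (Strict a b) (Strict c d)) (Strict e f)) \<in> S4K_ext A"
proof (rule tr_IImp_I)
  let ?P = "BoxM (MImp (tr a) (tr b))" and ?Q = "BoxM (MImp (tr c) (tr d))"
    and ?R = "BoxM (MImp (tr e) (tr f))"
  have "MImp (BoxM (MAnd (MImp (tr a) (tr b)) (MImp (tr c) (tr d)))) ?R \<in> S4K_ext A"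
    by (rule S4K_BoxM_mono[OF assms])
  then have "MImp (MAnd ?P ?Q) ?R \<in> S4K_ext A"
    by (rule S4K_taut_mp2[OF _ S4K_BoxM_conj[of "MImp (tr a) (tr b)" "MImp (tr c) (tr d)"]])
      (auto simp: ctaut_def)
  then have "MImp (BoxI (MAnd (BoxI ?P) (BoxI ?Q))) ?R \<in> S4K_ext A"
    by (rule S4K_taut_mp4[OF _ S4K_T_I S4K_T_I[of ?P] S4K_T_I[of ?Q]]) (auto simp: ctaut_def)
  then show "MImp (tr (IAnd (Strict a b) (Strict c d))) (tr (Strict e f)) \<in> S4K_ext A"
    by (simp add: S4K_BoxI_intro)
qed

lemma tr_isubst:
  "MImp (msubst (tr \<circ> \<sigma>) (tr a)) (tr (isubst \<sigma> a)) \<in> S4K_ext A \<and>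
   MImp (tr (isubst \<sigma> a)) (msubst (tr \<circ> \<sigma>) (tr a)) \<in> S4K_ext A"
proof (induction a)
  case (Atom p)
  then show ?case using S4K_T_I[of "tr (\<sigma> p)"] tr_persistent[of "\<sigma> p"] by simp
next
  case ITop then show ?case by (auto intro: S4K_ext.taut simp: ctaut_def)
next
  case IBot then show ?case by (auto intro: S4K_ext.taut simp: ctaut_def)
next
  case (IAnd a b)
  then show ?case using S4K_imp_cong by (auto intro!: S4K_BoxI_mono)
next
  case (IOr a b)
  then show ?case using S4K_imp_cong by (auto intro!: S4K_BoxI_mono)
next
  case (IImp a b)
  then show ?case using S4K_imp_cong by (auto intro!: S4K_BoxI_mono)
next
  case (Strict a b)
  then show ?case using S4K_imp_cong by (auto intro!: S4K_BoxI_mono S4K_BoxM_mono)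
qed

theorem tr_sound: "a \<in> iA_ext \<Gamma> \<Longrightarrow> tr a \<in> S4K_ext (tr ` \<Gamma>)"
proof (induction rule: iA_ext.induct)
  case (hyp a)
  then show ?case by (simp add: S4K_ext.hyp)
next
  case (ipc a)
  then show ?case by (rule tr_IPC)
next
  case (sAnd a b c)
  show ?case
    by (rule tr_strict_axiom, simp,
        rule S4K_taut_mp3[OF tr_persistent[of b] tr_persistent[of c]
          S4K_BoxI_conj[of "tr b" "tr c"]])
      (auto simp: ctaut_def)
next
  case (sOr a c b)
  show ?case
    by (rule tr_strict_axiom, simp, rule S4K_taut_mp1[OF S4K_T_I]) (auto simp: ctaut_def)
next
  case (sTr a b c)
  show ?case by (rule tr_strict_axiom, rule S4K_ext.taut) (auto simp: ctaut_def)
next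
  case (mp a b)
  then show ?case by (blast intro: tr_mp)
next
  case (strict a b)
  then show ?case by simp (meson S4K_ext.mp S4K_T_I S4K_ext.necI S4K_ext.necM)
next
  case (subst a \<sigma>)
  then show ?case using tr_isubst[of \<sigma> a] S4K_ext.subst[of _ _ "tr \<circ> \<sigma>"] by (meson S4K_ext.mp)
qed

section \<open>Derivations from hypotheses and prime theories\<close>

inductive derives :: "ifm set \<Rightarrow> ifm set \<Rightarrow> ifm \<Rightarrow> bool" for G X where
  hyp: "a \<in> X \<Longrightarrow> derives G X a"
| axiom: "a \<in> iA_ext G \<Longrightarrow> derives G X a"
| mp: "derives G X a \<Longrightarrow> derives G X (IImp a b) \<Longrightarrow> derives G X b"

lemma IPC_imp_refl: "IImp a a \<in> IPC"
  using IPC.mp[OF IPC.ax1 IPC.mp[OF IPC.ax1 IPC.ax2]] .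

lemma derives_IPC: "a \<in> IPC \<Longrightarrow> derives G X a"
  by (rule derives.axiom, rule iA_ext.ipc)

lemma derives_deduction: "derives G (insert a X) b \<Longrightarrow> derives G X (IImp a b)"
proof (induction rule: derives.induct)
  case (hyp b)
  then show ?case
    by (auto intro: derives_IPC IPC_imp_refl derives.mp[OF derives.hyp derives_IPC[OF IPC.ax1]])
next
  case (axiom b)
  then show ?case by (rule derives.mp[OF derives.axiom derives_IPC[OF IPC.ax1]])
next
  case (mp b c)
  show ?case by (rule derives.mp[OF mp.IH(1) derives.mp[OF mp.IH(2) derives_IPC[OF IPC.ax2]]])
qed

lemma derives_emptyD: "derives G {} a \<Longrightarrow> a \<in> iA_ext G"
  by (induction rule: derives.induct) (auto elim: iA_ext.mp)

lemma derives_imp_iA_ext: "derives G {a} b \<Longrightarrow> IImp a b \<in> iA_ext G"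
  by (rule derives_emptyD, rule derives_deduction) simp

lemma derives_conjI: "derives G X a \<Longrightarrow> derives G X b \<Longrightarrow> derives G X (IAnd a b)"
  by (rule derives.mp[OF _ derives.mp[OF _ derives_IPC[OF IPC.ax5]]])

lemma derives_conjE1: "derives G X (IAnd a b) \<Longrightarrow> derives G X a"
  by (rule derives.mp[OF _ derives_IPC[OF IPC.ax3]])

lemma derives_conjE2: "derives G X (IAnd a b) \<Longrightarrow> derives G X b"
  by (rule derives.mp[OF _ derives_IPC[OF IPC.ax4]])

lemma derives_disjI1: "derives G X a \<Longrightarrow> derives G X (IOr a b)"
  by (rule derives.mp[OF _ derives_IPC[OF IPC.ax6]])

lemma derives_disjI2: "derives G X b \<Longrightarrow> derives G X (IOr a b)"
  by (rule derives.mp[OF _ derives_IPC[OF IPC.ax7]])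

lemma derives_disjE:
  "derives G X (IOr a b) \<Longrightarrow> derives G X (IImp a c) \<Longrightarrow> derives G X (IImp b c) \<Longrightarrow> derives G X c"
  by (rule derives.mp[OF _ derives.mp[OF _ derives.mp[OF _ derives_IPC[OF IPC.ax8]]]])

definition iA_theory :: "ifm set \<Rightarrow> ifm set \<Rightarrow> bool" where
  "iA_theory G u \<longleftrightarrow> iA_ext G \<subseteq> u \<and> (\<forall>a b. a \<in> u \<longrightarrow> IImp a b \<in> u \<longrightarrow> b \<in> u)"

definition closed_theory :: "ifm set \<Rightarrow> (ifm \<times> ifm) set \<Rightarrow> ifm set \<Rightarrow> bool" where
  "closed_theory G R u \<longleftrightarrow> iA_theory G u \<and> (\<forall>c d. (c, d) \<in> R \<longrightarrow> c \<in> u \<longrightarrow> d \<in> u)"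

definition prime_theory :: "ifm set \<Rightarrow> ifm set \<Rightarrow> bool" where
  "prime_theory G u \<longleftrightarrow> iA_theory G u \<and> IBot \<notin> u \<and> (\<forall>a b. IOr a b \<in> u \<longrightarrow> a \<in> u \<or> b \<in> u)"

text \<open>The prime extension lemma is used with \<open>R\<close> the provable implications of \<open>iA \<oplus> G\<close> (to refute
  an implication) and with \<open>R\<close> the strict implications of a prime theory (to refute a strict
  implication); \<open>entailment\<close> collects what both have in common.\<close>

definition entailment :: "ifm set \<Rightarrow> (ifm \<times> ifm) set \<Rightarrow> bool" where
  "entailment G R \<longleftrightarrow> (\<forall>c d. IImp c d \<in> iA_ext G \<longrightarrow> (c, d) \<in> R) \<and>
     (\<forall>c d e. (c, d) \<in> R \<longrightarrow> (d, e) \<in> R \<longrightarrow> (c, e) \<in> R) \<and>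
     (\<forall>c d e. (c, d) \<in> R \<longrightarrow> (c, e) \<in> R \<longrightarrow> (c, IAnd d e) \<in> R) \<and>
     (\<forall>c d e. (c, e) \<in> R \<longrightarrow> (d, e) \<in> R \<longrightarrow> (IOr c d, e) \<in> R)"

definition consequences :: "ifm set \<Rightarrow> (ifm \<times> ifm) set \<Rightarrow> ifm set \<Rightarrow> ifm set" where
  "consequences G R X = {d. \<exists>c. derives G X c \<and> (c, d) \<in> R}"

lemma iA_theory_mp: "iA_theory G u \<Longrightarrow> a \<in> u \<Longrightarrow> IImp a b \<in> u \<Longrightarrow> b \<in> u"
  unfolding iA_theory_def by blast

lemma iA_theory_iA_ext: "iA_theory G u \<Longrightarrow> a \<in> iA_ext G \<Longrightarrow> a \<in> u"
  unfolding iA_theory_def by blast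

lemma iA_theory_derives:
  assumes "iA_theory G u" "derives G u a"
  shows "a \<in> u"
  using assms(2)
  by (induction rule: derives.induct) (auto intro: iA_theory_iA_ext[OF assms(1)] iA_theory_mp[OF assms(1)])

lemma subset_consequences: "entailment G R \<Longrightarrow> X \<subseteq> consequences G R X"
  unfolding entailment_def consequences_def
  using derives.hyp iA_ext.ipc[OF IPC_imp_refl] by blast

lemma closed_theory_consequences:
  assumes R: "entailment G R"
  shows "closed_theory G R (consequences G R X)"
proof -
  have R_iA: "\<And>c d. IImp c d \<in> iA_ext G \<Longrightarrow> (c, d) \<in> R"
    and R_trans: "\<And>c d e. (c, d) \<in> R \<Longrightarrow> (d, e) \<in> R \<Longrightarrow> (c, e) \<in> R"
    and R_conj: "\<And>c d e. (c, d) \<in> R \<Longrightarrow> (c, e) \<in> R \<Longrightarrow> (c, IAnd d e) \<in> R"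
    using R unfolding entailment_def by blast+
  have "d \<in> consequences G R X" if d: "d \<in> iA_ext G" for d
  proof -
    have "IImp ITop d \<in> iA_ext G"
      by (rule derives_emptyD, rule derives.mp[OF derives.axiom[OF d] derives_IPC[OF IPC.ax1]])
    then show ?thesis
      unfolding consequences_def using R_iA derives_IPC[OF IPC.ax10] by blast
  qed
  moreover have "b \<in> consequences G R X"
    if a: "a \<in> consequences G R X" and ab: "IImp a b \<in> consequences G R X" for a b
  proof -
    obtain c1 c2 where c: "derives G X c1" "(c1, a) \<in> R" "derives G X c2" "(c2, IImp a b) \<in> R"
      using a ab unfolding consequences_def by blast
    have "(IAnd c1 c2, a) \<in> R" "(IAnd c1 c2, IImp a b) \<in> R"
      using R_trans[OF R_iA[OF iA_ext.ipc[OF IPC.ax3]]] R_trans[OF R_iA[OF iA_ext.ipc[OF IPC.ax4]]] c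
      by blast+
    moreover have "(IAnd a (IImp a b), b) \<in> R"
      by (rule R_iA, rule derives_imp_iA_ext,
          rule derives.mp[OF derives_conjE1 derives_conjE2]; rule derives.hyp; simp)
    ultimately have "(IAnd c1 c2, b) \<in> R" using R_conj R_trans by blast
    then show ?thesis unfolding consequences_def using c derives_conjI by blast
  qed
  moreover have "e \<in> consequences G R X" if "(d, e) \<in> R" "d \<in> consequences G R X" for d e
    using that R_trans unfolding consequences_def by blast
  ultimately show ?thesis unfolding closed_theory_def iA_theory_def by blast
qed

lemma closed_theory_Union:
  assumes "C \<noteq> {}" and closed: "\<And>u. u \<in> C \<Longrightarrow> closed_theory G R u"
    and chain: "\<And>x y. x \<in> C \<Longrightarrow> y \<in> C \<Longrightarrow> x \<subseteq> y \<or> y \<subseteq> x"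
  shows "closed_theory G R (\<Union>C)"
proof -
  have mp: "c \<in> \<Union>C" if a: "a \<in> \<Union>C" and ac: "IImp a c \<in> \<Union>C" for a c
  proof -
    obtain x y where xy: "x \<in> C" "y \<in> C" "a \<in> x" "IImp a c \<in> y" using a ac by blast
    show ?thesis
    proof (cases "x \<subseteq> y")
      case True
      then show ?thesis using xy iA_theory_mp closed[OF xy(2)] unfolding closed_theory_def by blast
    next
      case False
      then have "y \<subseteq> x" using chain[OF xy(1,2)] by blast
      then show ?thesis using xy iA_theory_mp closed[OF xy(1)] unfolding closed_theory_def by blast
    qed
  qed
  obtain u where "u \<in> C" using assms(1) by blast
  then have "iA_ext G \<subseteq> \<Union>C"
    using closed unfolding closed_theory_def iA_theory_def by blast
  moreover have "\<forall>c d. (c, d) \<in> R \<longrightarrow> c \<in> \<Union>C \<longrightarrow> d \<in> \<Union>C"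
    using closed unfolding closed_theory_def by blast
  ultimately show ?thesis using mp unfolding closed_theory_def iA_theory_def by blast
qed

lemma maximal_closed_theory_prime:
  assumes R: "entailment G R" and u: "closed_theory G R u" "b \<notin> u"
    and maximal: "\<And>x. closed_theory G R x \<Longrightarrow> u \<subseteq> x \<Longrightarrow> b \<notin> x \<Longrightarrow> x = u"
  shows "prime_theory G u"
proof -
  have th: "iA_theory G u" using u(1) unfolding closed_theory_def by blast
  have "IBot \<notin> u"
    using u(2) iA_theory_mp[OF th] iA_theory_iA_ext[OF th iA_ext.ipc[OF IPC.ax9]] by blast
  moreover have "x \<in> u \<or> y \<in> u" if xy: "IOr x y \<in> u" for x y
  proof (rule ccontr)
    assume "\<not> (x \<in> u \<or> y \<in> u)"
    moreover have "b \<in> consequences G R (insert z u)" if "z \<notin> u" for z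
    proof (rule ccontr)
      assume "b \<notin> consequences G R (insert z u)"
      then have "consequences G R (insert z u) = u"
        using maximal[OF closed_theory_consequences[OF R]] subset_consequences[OF R, of "insert z u"]
        by blast
      then show False using subset_consequences[OF R, of "insert z u"] that by blast
    qed
    ultimately obtain c1 c2 where c: "derives G (insert x u) c1" "(c1, b) \<in> R"
      "derives G (insert y u) c2" "(c2, b) \<in> R"
      unfolding consequences_def by blast
    have "derives G u (IOr c1 c2)"
      by (rule derives_disjE[OF derives.hyp[OF xy]];
          rule derives_deduction, rule derives_disjI1 derives_disjI2, rule c)
    then have "IOr c1 c2 \<in> u" by (rule iA_theory_derives[OF th])
    moreover have "(IOr c1 c2, b) \<in> R" using R c unfolding entailment_def by blast
    ultimately show False using u unfolding closed_theory_def by blast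
  qed
  ultimately show ?thesis using th unfolding prime_theory_def by blast
qed

lemma prime_extension:
  assumes R: "entailment G R" and b: "b \<notin> consequences G R S"
  shows "\<exists>u. closed_theory G R u \<and> prime_theory G u \<and> S \<subseteq> u \<and> b \<notin> u"
proof -
  define T where "T = {u. closed_theory G R u \<and> S \<subseteq> u \<and> b \<notin> u}"
  have "T \<noteq> {}"
    using closed_theory_consequences[OF R] subset_consequences[OF R] b unfolding T_def by blast
  moreover have "\<Union>C \<in> T" if C: "C \<noteq> {}" "subset.chain T C" for C
  proof -
    have "C \<subseteq> T" "\<And>x y. x \<in> C \<Longrightarrow> y \<in> C \<Longrightarrow> x \<subseteq> y \<or> y \<subseteq> x"
      using C(2) unfolding subset.chain_def by auto
    then have "closed_theory G R (\<Union>C)"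
      using closed_theory_Union[OF C(1)] unfolding T_def by blast
    then show ?thesis using C(1) \<open>C \<subseteq> T\<close> unfolding T_def by blast
  qed
  ultimately obtain u where "u \<in> T" and maximal: "\<And>x. x \<in> T \<Longrightarrow> u \<subseteq> x \<Longrightarrow> x = u"
    using subset_Zorn_nonempty[of T] by blast
  then show ?thesis
    using maximal_closed_theory_prime[OF R, of u b] unfolding T_def by blast
qed

section \<open>The canonical frame\<close>

definition worlds :: "ifm set \<Rightarrow> ifm set set" where
  "worlds G = {w. prime_theory G w}"

definition truth_set :: "ifm set \<Rightarrow> ifm \<Rightarrow> ifm set set" where
  "truth_set G a = {w \<in> worlds G. a \<in> w}"

definition strict_acc :: "ifm set \<Rightarrow> ifm set \<Rightarrow> bool" where
  "strict_acc w u \<longleftrightarrow> (\<forall>c d. Strict c d \<in> w \<longrightarrow> c \<in> u \<longrightarrow> d \<in> u)"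

definition boxI_set :: "ifm set \<Rightarrow> ifm set set \<Rightarrow> ifm set set" where
  "boxI_set G X = {w \<in> worlds G. \<forall>u \<in> worlds G. w \<subseteq> u \<longrightarrow> u \<in> X}"

definition boxM_set :: "ifm set \<Rightarrow> ifm set set \<Rightarrow> ifm set set" where
  "boxM_set G X = {w \<in> worlds G. \<forall>u \<in> worlds G. strict_acc w u \<longrightarrow> u \<in> X}"

definition provable_imps :: "ifm set \<Rightarrow> (ifm \<times> ifm) set" where
  "provable_imps G = {(c, d). IImp c d \<in> iA_ext G}"

definition strict_imps :: "ifm set \<Rightarrow> (ifm \<times> ifm) set" where
  "strict_imps w = {(c, d). Strict c d \<in> w}"

lemma prime_theory_iA_theory: "prime_theory G w \<Longrightarrow> iA_theory G w"
  by (simp add: prime_theory_def)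

lemma prime_theory_derives: "prime_theory G w \<Longrightarrow> derives G w a \<Longrightarrow> a \<in> w"
  using iA_theory_derives prime_theory_iA_theory by blast

lemma prime_theory_iA_ext: "prime_theory G w \<Longrightarrow> a \<in> iA_ext G \<Longrightarrow> a \<in> w"
  using iA_theory_iA_ext prime_theory_iA_theory by blast

lemma prime_theory_mp: "prime_theory G w \<Longrightarrow> a \<in> w \<Longrightarrow> IImp a b \<in> w \<Longrightarrow> b \<in> w"
  using iA_theory_mp prime_theory_iA_theory by blast

lemma prime_theory_IAnd: "prime_theory G w \<Longrightarrow> IAnd a b \<in> w \<longleftrightarrow> a \<in> w \<and> b \<in> w"
  using prime_theory_derives derives_conjI derives_conjE1 derives_conjE2 derives.hyp by metis

lemma prime_theory_IOr: "prime_theory G w \<Longrightarrow> IOr a b \<in> w \<longleftrightarrow> a \<in> w \<or> b \<in> w"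
  unfolding prime_theory_def
  using iA_theory_derives derives_disjI1 derives_disjI2 derives.hyp by metis

lemma prime_theory_ITop: "prime_theory G w \<Longrightarrow> ITop \<in> w"
  using prime_theory_iA_ext iA_ext.ipc IPC.ax10 by blast

lemma prime_theory_IBot: "prime_theory G w \<Longrightarrow> IBot \<notin> w"
  by (simp add: prime_theory_def)

lemma entailment_provable_imps: "entailment G (provable_imps G)"
  unfolding entailment_def provable_imps_def
proof (intro conjI allI impI; simp)
  fix c d e assume "IImp c d \<in> iA_ext G" "IImp d e \<in> iA_ext G"
  then show "IImp c e \<in> iA_ext G"
    by (intro derives_imp_iA_ext) (rule derives.mp[OF derives.mp[OF derives.hyp derives.axiom] derives.axiom]; simp)
next
  fix c d e assume "IImp c d \<in> iA_ext G" "IImp c e \<in> iA_ext G"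
  then show "IImp c (IAnd d e) \<in> iA_ext G"
    by (intro derives_imp_iA_ext derives_conjI) (rule derives.mp[OF derives.hyp derives.axiom]; simp)+
next
  fix c d e assume "IImp c e \<in> iA_ext G" "IImp d e \<in> iA_ext G"
  then show "IImp (IOr c d) e \<in> iA_ext G"
    using iA_ext.mp[OF _ iA_ext.mp[OF _ iA_ext.ipc[OF IPC.ax8]]] by blast
qed

lemma entailment_strict_imps:
  assumes w: "prime_theory G w"
  shows "entailment G (strict_imps w)"
  using prime_theory_iA_ext[OF w iA_ext.strict] prime_theory_IAnd[OF w]
    prime_theory_mp[OF w _ prime_theory_iA_ext[OF w iA_ext.sTr]]
    prime_theory_mp[OF w _ prime_theory_iA_ext[OF w iA_ext.sAnd]]
    prime_theory_mp[OF w _ prime_theory_iA_ext[OF w iA_ext.sOr]]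
  unfolding entailment_def strict_imps_def by blast

lemma IImp_mem_iff:
  assumes w: "prime_theory G w"
  shows "IImp a b \<in> w \<longleftrightarrow> (\<forall>u \<in> worlds G. w \<subseteq> u \<longrightarrow> a \<in> u \<longrightarrow> b \<in> u)"
proof
  assume "IImp a b \<in> w"
  then show "\<forall>u \<in> worlds G. w \<subseteq> u \<longrightarrow> a \<in> u \<longrightarrow> b \<in> u"
    unfolding worlds_def using prime_theory_mp by blast
next
  assume all: "\<forall>u \<in> worlds G. w \<subseteq> u \<longrightarrow> a \<in> u \<longrightarrow> b \<in> u"
  show "IImp a b \<in> w"
  proof (rule ccontr)
    assume ab: "IImp a b \<notin> w"
    have "b \<notin> consequences G (provable_imps G) (insert a w)"
    proof
      assume "b \<in> consequences G (provable_imps G) (insert a w)"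
      then obtain c where "derives G (insert a w) c" "IImp c b \<in> iA_ext G"
        unfolding consequences_def provable_imps_def by blast
      then have "derives G w (IImp a b)"
        by (intro derives_deduction) (rule derives.mp[OF _ derives.axiom])
      then show False using prime_theory_derives[OF w] ab by blast
    qed
    then obtain u where "prime_theory G u" "insert a w \<subseteq> u" "b \<notin> u"
      using prime_extension[OF entailment_provable_imps] by blast
    then show False using all unfolding worlds_def by blast
  qed
qed

lemma Strict_mem_iff:
  assumes w: "prime_theory G w"
  shows "Strict a b \<in> w \<longleftrightarrow> (\<forall>u \<in> worlds G. strict_acc w u \<longrightarrow> a \<in> u \<longrightarrow> b \<in> u)"
proof
  assume "Strict a b \<in> w"
  then show "\<forall>u \<in> worlds G. strict_acc w u \<longrightarrow> a \<in> u \<longrightarrow> b \<in> u"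
    unfolding strict_acc_def by blast
next
  assume all: "\<forall>u \<in> worlds G. strict_acc w u \<longrightarrow> a \<in> u \<longrightarrow> b \<in> u"
  show "Strict a b \<in> w"
  proof (rule ccontr)
    assume ab: "Strict a b \<notin> w"
    have "b \<notin> consequences G (strict_imps w) {a}"
    proof
      assume "b \<in> consequences G (strict_imps w) {a}"
      then obtain c where c: "derives G {a} c" "Strict c b \<in> w"
        unfolding consequences_def strict_imps_def by blast
      have "Strict a c \<in> w"
        by (rule prime_theory_iA_ext[OF w iA_ext.strict[OF derives_imp_iA_ext[OF c(1)]]])
      then show False
        using c(2) ab entailment_strict_imps[OF w] unfolding entailment_def strict_imps_def by blast
    qed
    then obtain u where "closed_theory G (strict_imps w) u" "prime_theory G u" "a \<in> u" "b \<notin> u"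
      using prime_extension[OF entailment_strict_imps[OF w]] by blast
    then show False using all unfolding worlds_def closed_theory_def strict_acc_def strict_imps_def
      by blast
  qed
qed

section \<open>The general frame of definable sets\<close>

definition cond_set :: "ifm set \<Rightarrow> (ifm \<times> ifm) list \<Rightarrow> ifm set set" where
  "cond_set G cl = {w \<in> worlds G. \<forall>(a, b) \<in> set cl. a \<in> w \<longrightarrow> b \<in> w}"

definition definable :: "ifm set \<Rightarrow> ifm set set \<Rightarrow> bool" where
  "definable G X \<longleftrightarrow> (\<exists>cl. X = cond_set G cl)"

fun conj_list :: "ifm list \<Rightarrow> ifm" where
  "conj_list [] = ITop"
| "conj_list (a # as) = IAnd a (conj_list as)"

lemma conj_list_mem_iff: "prime_theory G w \<Longrightarrow> conj_list as \<in> w \<longleftrightarrow> (\<forall>a \<in> set as. a \<in> w)"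
  by (induction as) (auto simp: prime_theory_IAnd prime_theory_ITop)

lemma truth_set_eq_cond_set: "truth_set G a = cond_set G [(ITop, a)]"
  by (auto simp: truth_set_def cond_set_def worlds_def prime_theory_ITop)

lemma definable_truth_set: "definable G (truth_set G a)"
  unfolding definable_def truth_set_eq_cond_set by blast

lemma boxI_truth_set: "boxI_set G (truth_set G a) = truth_set G a"
  by (auto simp: boxI_set_def truth_set_def)

lemma boxI_cond_set:
  "boxI_set G (cond_set G cl) = truth_set G (conj_list (map (\<lambda>(a, b). IImp a b) cl))"
proof -
  have "w \<in> boxI_set G (cond_set G cl) \<longleftrightarrow> w \<in> truth_set G (conj_list (map (\<lambda>(a, b). IImp a b) cl))"
    for w
  proof (cases "prime_theory G w")
    case True
    have "w \<in> boxI_set G (cond_set G cl) \<longleftrightarrow>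
        (\<forall>(a, b) \<in> set cl. \<forall>u \<in> worlds G. w \<subseteq> u \<longrightarrow> a \<in> u \<longrightarrow> b \<in> u)"
      using True by (auto simp: boxI_set_def cond_set_def worlds_def)
    also have "\<dots> \<longleftrightarrow> (\<forall>(a, b) \<in> set cl. IImp a b \<in> w)"
      using IImp_mem_iff[OF True] by auto
    also have "\<dots> \<longleftrightarrow> w \<in> truth_set G (conj_list (map (\<lambda>(a, b). IImp a b) cl))"
      using True by (auto simp: truth_set_def worlds_def conj_list_mem_iff)
    finally show ?thesis .
  qed (auto simp: boxI_set_def truth_set_def worlds_def)
  then show ?thesis by blast
qed

lemma boxM_cond_set:
  "boxM_set G (cond_set G cl) = truth_set G (conj_list (map (\<lambda>(a, b). Strict a b) cl))"
proof -
  have "w \<in> boxM_set G (cond_set G cl) \<longleftrightarrow> w \<in> truth_set G (conj_list (map (\<lambda>(a, b). Strict a b) cl))"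
    for w
  proof (cases "prime_theory G w")
    case True
    have "w \<in> boxM_set G (cond_set G cl) \<longleftrightarrow>
        (\<forall>(a, b) \<in> set cl. \<forall>u \<in> worlds G. strict_acc w u \<longrightarrow> a \<in> u \<longrightarrow> b \<in> u)"
      using True by (auto simp: boxM_set_def cond_set_def worlds_def)
    also have "\<dots> \<longleftrightarrow> (\<forall>(a, b) \<in> set cl. Strict a b \<in> w)"
      using Strict_mem_iff[OF True] by auto
    also have "\<dots> \<longleftrightarrow> w \<in> truth_set G (conj_list (map (\<lambda>(a, b). Strict a b) cl))"
      using True by (auto simp: truth_set_def worlds_def conj_list_mem_iff)
    finally show ?thesis .
  qed (auto simp: boxM_set_def truth_set_def worlds_def)
  then show ?thesis by blast
qed

lemma definable_boxI: "definable G X \<Longrightarrow> definable G (boxI_set G X)"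
  by (auto simp: definable_def boxI_cond_set truth_set_eq_cond_set)

lemma definable_boxM: "definable G X \<Longrightarrow> definable G (boxM_set G X)"
  by (auto simp: definable_def boxM_cond_set truth_set_eq_cond_set)

lemma definable_worlds: "definable G (worlds G)"
  unfolding definable_def by (rule exI[of _ "[]"]) (auto simp: cond_set_def)

lemma definable_empty: "definable G {}"
  unfolding definable_def
  by (rule exI[of _ "[(ITop, IBot)]"]) (auto simp: cond_set_def worlds_def prime_theory_ITop prime_theory_IBot)

lemma cond_set_append: "cond_set G (xs @ ys) = cond_set G xs \<inter> cond_set G ys"
  by (auto simp: cond_set_def)

lemma definable_Int: "definable G X \<Longrightarrow> definable G Y \<Longrightarrow> definable G (X \<inter> Y)"
  unfolding definable_def by (metis cond_set_append)

lemma cond_set_Un: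
  "cond_set G xs \<union> cond_set G ys =
    cond_set G [(IAnd (fst x) (fst y), IOr (snd x) (snd y)). x \<leftarrow> xs, y \<leftarrow> ys]"
    (is "_ = cond_set G ?zs")
proof -
  have "w \<in> cond_set G ?zs \<longleftrightarrow> w \<in> worlds G \<and>
      (\<forall>x \<in> set xs. \<forall>y \<in> set ys. fst x \<in> w \<and> fst y \<in> w \<longrightarrow> snd x \<in> w \<or> snd y \<in> w)" for w
    by (auto simp: cond_set_def worlds_def prime_theory_IAnd prime_theory_IOr) (metis fst_conv snd_conv)+
  then show ?thesis unfolding cond_set_def by (auto simp: split_beta)
qed

lemma definable_Un: "definable G X \<Longrightarrow> definable G Y \<Longrightarrow> definable G (X \<union> Y)"
  unfolding definable_def using cond_set_Un by blast

lemma definable_Diff: "definable G X \<Longrightarrow> definable G (worlds G - X)"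
proof -
  have "definable G (worlds G - cond_set G cl)" for cl
  proof (induction cl)
    case Nil
    then show ?case using definable_empty by (simp add: cond_set_def)
  next
    case (Cons c cl)
    obtain a b where c: "c = (a, b)" by fastforce
    have "worlds G - cond_set G (c # cl) = cond_set G [(ITop, a), (b, IBot)] \<union> (worlds G - cond_set G cl)"
      by (auto simp: cond_set_def c worlds_def prime_theory_ITop prime_theory_IBot)
    then show ?case using definable_Un[OF _ Cons.IH] by (auto simp: definable_def)
  qed
  then show "definable G X \<Longrightarrow> definable G (worlds G - X)" by (auto simp: definable_def)
qed

section \<open>Modal semantics over the canonical frame\<close>

primrec msem :: "ifm set \<Rightarrow> (nat \<Rightarrow> ifm set set) \<Rightarrow> mfm \<Rightarrow> ifm set set" where
  "msem G V (MAtom p) = V p"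
| "msem G V MTop = worlds G"
| "msem G V MBot = {}"
| "msem G V (MAnd a b) = msem G V a \<inter> msem G V b"
| "msem G V (MOr a b) = msem G V a \<union> msem G V b"
| "msem G V (MImp a b) = (worlds G - msem G V a) \<union> msem G V b"
| "msem G V (BoxI a) = boxI_set G (msem G V a)"
| "msem G V (BoxM a) = boxM_set G (msem G V a)"

definition canonical_valid :: "ifm set \<Rightarrow> mfm \<Rightarrow> bool" where
  "canonical_valid G a \<longleftrightarrow> (\<forall>V. (\<forall>p. definable G (V p)) \<longrightarrow> worlds G \<subseteq> msem G V a)"

lemma definable_msem: "(\<And>p. definable G (V p)) \<Longrightarrow> definable G (msem G V a)"
  by (induction a) (auto intro: definable_worlds definable_empty definable_Int definable_Un
      definable_Diff definable_boxI definable_boxM)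

lemma msem_msubst: "msem G V (msubst \<sigma> a) = msem G (\<lambda>p. msem G V (\<sigma> p)) a"
  by (induction a) auto

lemma meval_msem: "w \<in> worlds G \<Longrightarrow> meval (\<lambda>x. w \<in> msem G V x) a \<longleftrightarrow> w \<in> msem G V a"
  by (induction a) auto

lemma exists_Grz_point:
  assumes X: "definable G X" and w: "w \<in> worlds G" "w \<notin> X"
  shows "\<exists>u \<in> worlds G. w \<subseteq> u \<and> u \<notin> X \<and> (\<forall>v \<in> worlds G. u \<subseteq> v \<longrightarrow> v \<in> X \<longrightarrow> v \<in> boxI_set G X)"
proof -
  obtain cl where cl: "X = cond_set G cl" using X by (auto simp: definable_def)
  define F where "F = fst ` set cl \<union> snd ` set cl"
  have "finite F" by (simp add: F_def)
  have depends_on_F: "v \<in> X \<longleftrightarrow> v' \<in> X" if "v \<in> worlds G" "v' \<in> worlds G" "F \<inter> v = F \<inter> v'" for v v'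
  proof -
    have "\<forall>(a, b) \<in> set cl. (a \<in> v \<longleftrightarrow> a \<in> v') \<and> (b \<in> v \<longleftrightarrow> b \<in> v')"
      using that(3) unfolding F_def by force
    then show ?thesis using that unfolding cl cond_set_def by auto
  qed
  \<comment> \<open>take \<open>u\<close> outside \<open>X\<close> above \<open>w\<close> containing as many formulas of \<open>F\<close> as possible\<close>
  define M where "M = {card (F \<inter> u) | u. u \<in> worlds G \<and> w \<subseteq> u \<and> u \<notin> X}"
  have "finite M"
    by (rule finite_subset[of _ "{..card F}"]) (auto simp: M_def \<open>finite F\<close> intro: card_mono)
  moreover have "M \<noteq> {}" using w unfolding M_def by blast
  ultimately have "Max M \<in> M" by (rule Max_in)
  then obtain u where u: "u \<in> worlds G" "w \<subseteq> u" "u \<notin> X" "card (F \<inter> u) = Max M"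
    unfolding M_def by force
  have "v \<in> boxI_set G X" if v: "v \<in> worlds G" "u \<subseteq> v" "v \<in> X" for v
  proof (rule ccontr)
    assume "v \<notin> boxI_set G X"
    then obtain z where z: "z \<in> worlds G" "v \<subseteq> z" "z \<notin> X" using v(1) unfolding boxI_set_def by blast
    have "card (F \<inter> z) \<in> M" unfolding M_def using z v u by blast
    then have "card (F \<inter> z) \<le> card (F \<inter> u)" using u(4) Max_ge[OF \<open>finite M\<close>] by simp
    moreover have "F \<inter> u \<subseteq> F \<inter> z" using v z by blast
    ultimately have "F \<inter> u = F \<inter> z"
      using card_subset_eq card_mono \<open>finite F\<close> by (metis finite_Int le_antisym)
    then have "F \<inter> v = F \<inter> u" using v z by blast
    then show False using depends_on_F[OF v(1) u(1)] v u by blast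
  qed
  then show ?thesis using u by blast
qed

lemma canonical_valid_Grz: "canonical_valid G Grz_i"
  unfolding canonical_valid_def
proof (intro allI impI subsetI)
  fix V :: "nat \<Rightarrow> ifm set set" and w assume V: "\<forall>p. definable G (V p)" and w: "w \<in> worlds G"
  let ?X = "V 0"
  show "w \<in> msem G V Grz_i"
  proof (cases "w \<in> ?X")
    case True
    then show ?thesis by (simp add: Grz_i_def)
  next
    case False
    obtain u where u: "u \<in> worlds G" "w \<subseteq> u" "u \<notin> ?X"
      and final: "\<forall>v \<in> worlds G. u \<subseteq> v \<longrightarrow> v \<in> ?X \<longrightarrow> v \<in> boxI_set G ?X"
      using exists_Grz_point[OF _ w False] V by blast
    have "u \<in> boxI_set G ((worlds G - ?X) \<union> boxI_set G ?X)"
      using u(1) final unfolding boxI_set_def by blast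
    then have "w \<notin> boxI_set G ((worlds G - boxI_set G ((worlds G - ?X) \<union> boxI_set G ?X)) \<union> ?X)"
      using u unfolding boxI_set_def by blast
    then show ?thesis using w by (simp add: Grz_i_def)
  qed
qed

lemma strict_acc_antimono: "w \<subseteq> u \<Longrightarrow> strict_acc u v \<Longrightarrow> strict_acc w v"
  unfolding strict_acc_def by blast

lemma canonical_valid_BHL: "canonical_valid G BHL"
  unfolding canonical_valid_def
  by (auto simp: BHL_def boxI_set_def boxM_set_def dest: strict_acc_antimono)

lemma msem_tr:
  assumes "\<And>p. truth_set G (\<sigma> p) = boxI_set G (V p)"
  shows "msem G V (tr \<phi>) = truth_set G (isubst \<sigma> \<phi>)"
proof (induction \<phi>)
  case (Atom p)
  then show ?case using assms by simp
next
  case ITop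
  then show ?case by (auto simp: truth_set_def worlds_def prime_theory_ITop)
next
  case IBot
  then show ?case by (auto simp: truth_set_def worlds_def prime_theory_IBot)
next
  case (IAnd a b)
  have "truth_set G a' \<inter> truth_set G b' = truth_set G (IAnd a' b')" for a' b'
    by (auto simp: truth_set_def worlds_def prime_theory_IAnd)
  then show ?case using IAnd by (simp add: boxI_truth_set)
next
  case (IOr a b)
  have "truth_set G a' \<union> truth_set G b' = truth_set G (IOr a' b')" for a' b'
    by (auto simp: truth_set_def worlds_def prime_theory_IOr)
  then show ?case using IOr by (simp add: boxI_truth_set)
next
  case (IImp a b)
  have "boxI_set G ((worlds G - truth_set G a') \<union> truth_set G b') = truth_set G (IImp a' b')" for a' b'
    using IImp_mem_iff by (auto simp: boxI_set_def truth_set_def worlds_def)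
  then show ?case using IImp by simp
next
  case (Strict a b)
  have "boxM_set G ((worlds G - truth_set G a') \<union> truth_set G b') = truth_set G (Strict a' b')" for a' b'
    using Strict_mem_iff by (auto simp: boxM_set_def truth_set_def worlds_def)
  then show ?case using Strict by (simp add: boxI_truth_set)
qed

lemma canonical_valid_tr:
  assumes "\<gamma> \<in> iA_ext G"
  shows "canonical_valid G (tr \<gamma>)"
  unfolding canonical_valid_def
proof (intro allI impI)
  fix V :: "nat \<Rightarrow> ifm set set" assume "\<forall>p. definable G (V p)"
  then have "\<forall>p. \<exists>a. truth_set G a = boxI_set G (V p)"
    using boxI_cond_set unfolding definable_def by metis
  then obtain \<sigma> where \<sigma>: "\<And>p. truth_set G (\<sigma> p) = boxI_set G (V p)" by metis
  have "isubst \<sigma> \<gamma> \<in> iA_ext G" using assms by (rule iA_ext.subst)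
  then show "worlds G \<subseteq> msem G V (tr \<gamma>)"
    unfolding msem_tr[OF \<sigma>] by (auto simp: truth_set_def worlds_def prime_theory_iA_ext)
qed

lemma S4K_ext_canonical_valid: "a \<in> S4K_ext ({Grz_i, BHL} \<union> tr ` G) \<Longrightarrow> canonical_valid G a"
proof (induction rule: S4K_ext.induct)
  case (hyp a)
  then show ?case using canonical_valid_Grz canonical_valid_BHL canonical_valid_tr[OF iA_ext.hyp] by blast
next
  case (taut a)
  then show ?case unfolding canonical_valid_def ctaut_def using meval_msem by blast
next
  case kI
  then show ?case by (simp add: canonical_valid_def axK_i_def) (unfold boxI_set_def, blast)
next
  case kM
  then show ?case by (simp add: canonical_valid_def axK_m_def) (unfold boxM_set_def, blast)
next
  case tI
  then show ?case by (simp add: canonical_valid_def axT_i_def) (unfold boxI_set_def, blast)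
next
  case fourI
  then show ?case by (simp add: canonical_valid_def ax4_i_def) (unfold boxI_set_def, blast)
next
  case (mp a b)
  then show ?case unfolding canonical_valid_def by (simp, blast)
next
  case (necI a)
  then show ?case unfolding canonical_valid_def by (simp, unfold boxI_set_def, blast)
next
  case (necM a)
  then show ?case unfolding canonical_valid_def by (simp, unfold boxM_set_def, blast)
next
  case (subst a \<sigma>)
  show ?case unfolding canonical_valid_def
  proof (intro allI impI)
    fix V :: "nat \<Rightarrow> ifm set set" assume "\<forall>p. definable G (V p)"
    then have "\<And>p. definable G (msem G V (\<sigma> p))" by (blast intro: definable_msem)
    then show "worlds G \<subseteq> msem G V (msubst \<sigma> a)"
      unfolding msem_msubst by (rule subst.IH[unfolded canonical_valid_def, rule_format])
  qed
qed

lemma isubst_Atom: "isubst Atom a = a"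
  by (induction a) auto

theorem tr_faithful:
  assumes "tr \<phi> \<in> S4K_ext ({Grz_i, BHL} \<union> tr ` G)"
  shows "\<phi> \<in> iA_ext G"
proof (rule ccontr)
  assume "\<phi> \<notin> iA_ext G"
  moreover have "\<phi> \<in> iA_ext G" if "\<phi> \<in> consequences G (provable_imps G) {}"
    using that iA_ext.mp[OF derives_emptyD] unfolding consequences_def provable_imps_def by blast
  ultimately obtain w where w: "prime_theory G w" "\<phi> \<notin> w"
    using prime_extension[OF entailment_provable_imps, where S="{}"] by blast
  define V where "V = (\<lambda>p. truth_set G (Atom p))"
  have "\<And>p. definable G (V p)" unfolding V_def by (rule definable_truth_set)
  then have "worlds G \<subseteq> msem G V (tr \<phi>)"
    by (rule S4K_ext_canonical_valid[OF assms, unfolded canonical_valid_def, rule_format])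
  also have "msem G V (tr \<phi>) = truth_set G \<phi>"
    using msem_tr[of G Atom V \<phi>] by (simp add: V_def boxI_truth_set isubst_Atom)
  finally show False using w by (auto simp: truth_set_def worlds_def)
qed

theorem theorem4p14:
  fixes \<Gamma> :: "ifm set" and \<Theta> :: "mfm set"
  assumes "S4K_logic \<Theta>"
    and "S4K_ext (tr ` \<Gamma>) \<subseteq> \<Theta>"
    and "\<Theta> \<subseteq> S4K_ext ({Grz_i, BHL} \<union> tr ` \<Gamma>)"
  shows "\<forall>\<phi>. \<phi> \<in> iA_ext \<Gamma> \<longleftrightarrow> tr \<phi> \<in> \<Theta>"
proof (intro allI iffI)
  fix \<phi>
  show "\<phi> \<in> iA_ext \<Gamma> \<Longrightarrow> tr \<phi> \<in> \<Theta>" using tr_sound assms(2) by blast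
  show "tr \<phi> \<in> \<Theta> \<Longrightarrow> \<phi> \<in> iA_ext \<Gamma>" using tr_faithful assms(3) by blast
qed

end
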